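(* For any connected graphs $G$ and $H$, $$\mu_t(G\,\Box\,H)\le \min\{(n(G)-|\mathcal{P}(G)|)\,\mu_t(H),\ (n(H)-|\mathcal{P}(H)|)\,\mu_t(G)\}.$$
   Context: All graphs are finite, simple and undirected; $n(G)$ denotes the order of $G$ and $N_G[v]$ the closed neighborhood of $v$. The Cartesian product $G\,\Box\,H$ has vertex set $V(G)\times V(H)$, with $(x,y)$ adjacent to $(x',y')$ iff either $x=x'$ and $yy'\in E(H)$, or $xx'\in E(G)$ and $y=y'$. Let $F$ be a connected graph and $X\subseteq V(F)$. Two vertices $x,y\in V(F)$ are $X$-visible if there exists a shortest $x,y$-path in $F$ none of whose internal vertices belongs to $X$. $X$ is a total mutual-visibility set of $F$ if every two vertices of $F$ are $X$-visible (the empty set is allowed). $\mu_t(F)$ is the maximum cardinality of a total mutual-visibility set of $F$. $\mathcal{P}(F)$ is the set of vertices $v$ of $F$ for which there exist two distinct vertices $u,w\in V(F)$ with $N_F[u]\cap N_F[w]=\{v\}$. *)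

theory Defs
  imports Main
begin

definition simple_graph :: "'a set \<Rightarrow> ('a \<Rightarrow> 'a \<Rightarrow> bool) \<Rightarrow> bool" where
  "simple_graph V E \<longleftrightarrow> finite V \<and>
     (\<forall>x y. E x y \<longrightarrow> x \<in> V \<and> y \<in> V) \<and>
     (\<forall>x y. E x y \<longrightarrow> E y x) \<and> (\<forall>x. \<not> E x x)"

definition is_walk :: "'a set \<Rightarrow> ('a \<Rightarrow> 'a \<Rightarrow> bool) \<Rightarrow> 'a list \<Rightarrow> bool" where
  "is_walk V E p \<longleftrightarrow> p \<noteq> [] \<and> set p \<subseteq> V \<and>
     (\<forall>i. Suc i < length p \<longrightarrow> E (p ! i) (p ! Suc i))"

definition walk_betw :: "'a set \<Rightarrow> ('a \<Rightarrow> 'a \<Rightarrow> bool) \<Rightarrow> 'a \<Rightarrow> 'a list \<Rightarrow> 'a \<Rightarrow> bool" where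
  "walk_betw V E x p y \<longleftrightarrow> is_walk V E p \<and> hd p = x \<and> last p = y"

definition connected_graph :: "'a set \<Rightarrow> ('a \<Rightarrow> 'a \<Rightarrow> bool) \<Rightarrow> bool" where
  "connected_graph V E \<longleftrightarrow> simple_graph V E \<and> V \<noteq> {} \<and>
     (\<forall>x\<in>V. \<forall>y\<in>V. \<exists>p. walk_betw V E x p y)"

definition gdist :: "'a set \<Rightarrow> ('a \<Rightarrow> 'a \<Rightarrow> bool) \<Rightarrow> 'a \<Rightarrow> 'a \<Rightarrow> nat" where
  "gdist V E x y = (LEAST n. \<exists>p. walk_betw V E x p y \<and> length p = Suc n)"

definition shortest_path :: "'a set \<Rightarrow> ('a \<Rightarrow> 'a \<Rightarrow> bool) \<Rightarrow> 'a \<Rightarrow> 'a list \<Rightarrow> 'a \<Rightarrow> bool" where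
  "shortest_path V E x p y \<longleftrightarrow> walk_betw V E x p y \<and> length p = Suc (gdist V E x y)"

definition internal :: "'a list \<Rightarrow> 'a set" where
  "internal p = set (butlast (tl p))"

definition visible :: "'a set \<Rightarrow> ('a \<Rightarrow> 'a \<Rightarrow> bool) \<Rightarrow> 'a set \<Rightarrow> 'a \<Rightarrow> 'a \<Rightarrow> bool" where
  "visible V E X x y \<longleftrightarrow> (\<exists>p. shortest_path V E x p y \<and> internal p \<inter> X = {})"

definition total_mv_set :: "'a set \<Rightarrow> ('a \<Rightarrow> 'a \<Rightarrow> bool) \<Rightarrow> 'a set \<Rightarrow> bool" where
  "total_mv_set V E X \<longleftrightarrow> X \<subseteq> V \<and> (\<forall>x\<in>V. \<forall>y\<in>V. visible V E X x y)"

definition mu_t :: "'a set \<Rightarrow> ('a \<Rightarrow> 'a \<Rightarrow> bool) \<Rightarrow> nat" where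
  "mu_t V E = Max (card ` {X. total_mv_set V E X})"

definition closed_nbhd :: "'a set \<Rightarrow> ('a \<Rightarrow> 'a \<Rightarrow> bool) \<Rightarrow> 'a \<Rightarrow> 'a set" where
  "closed_nbhd V E v = {u\<in>V. u = v \<or> E v u}"

definition Pset :: "'a set \<Rightarrow> ('a \<Rightarrow> 'a \<Rightarrow> bool) \<Rightarrow> 'a set" where
  "Pset V E = {v\<in>V. \<exists>u\<in>V. \<exists>w\<in>V. u \<noteq> w \<and> closed_nbhd V E u \<inter> closed_nbhd V E w = {v}}"

definition cart_V :: "'a set \<Rightarrow> 'b set \<Rightarrow> ('a \<times> 'b) set" where
  "cart_V VG VH = VG \<times> VH"

definition cart_E :: "'a set \<Rightarrow> ('a \<Rightarrow> 'a \<Rightarrow> bool) \<Rightarrow> 'b set \<Rightarrow> ('b \<Rightarrow> 'b \<Rightarrow> bool)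
    \<Rightarrow> ('a \<times> 'b) \<Rightarrow> ('a \<times> 'b) \<Rightarrow> bool" where
  "cart_E VG EG VH EH p q \<longleftrightarrow> p \<in> VG \<times> VH \<and> q \<in> VG \<times> VH \<and>
     ((fst p = fst q \<and> EH (snd p) (snd q)) \<or> (EG (fst p) (fst q) \<and> snd p = snd q))"

end

theory Submission
  imports Defs
begin

text \<open>
  Let \<open>X\<close> be a maximum total mutual-visibility set of \<open>G \<box> H\<close>. A shortest path between two
  vertices of an \<open>H\<close>-layer \<open>{g} \<times> V(H)\<close> never leaves the layer, because deleting its
  \<open>G\<close>-steps from its \<open>H\<close>-projection would give a shorter walk. Hence \<open>X\<close> meets every layer in a
  total mutual-visibility set of \<open>H\<close>, i.e. in at most \<open>\<mu>\<^sub>t(H)\<close> vertices. If \<open>g \<in> \<P>(G)\<close>, witnessed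
  by \<open>u, w\<close>, then \<open>(u, h)\<close> and \<open>(w, h)\<close> are at distance two with \<open>(g, h)\<close> as only common
  neighbour, so \<open>(g, h) \<notin> X\<close> and the layer of \<open>g\<close> is empty. Summing over the remaining
  \<open>n(G) - |\<P>(G)|\<close> layers gives the first bound; the second one follows from \<open>G \<box> H \<cong> H \<box> G\<close>.
\<close>

lemma not_is_walk_Nil [simp]: "\<not> is_walk V E []"
  by (simp add: is_walk_def)

lemma is_walk_singleton [simp]: "is_walk V E [x] \<longleftrightarrow> x \<in> V"
  by (simp add: is_walk_def)

lemma is_walk_Cons_Cons [simp]:
  "is_walk V E (x # y # p) \<longleftrightarrow> x \<in> V \<and> E x y \<and> is_walk V E (y # p)"
  unfolding is_walk_def by (auto simp: less_Suc_eq_0_disj nth_Cons split: nat.splits)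

lemma is_walk_append:
  assumes "is_walk V E p" "is_walk V E q" "last p = hd q"
  shows "is_walk V E (p @ tl q)"
  using assms
proof (induction p rule: induct_list012)
  case 1 then show ?case by simp
next
  case (2 x) then show ?case by (cases q) auto
next
  case (3 x y r) then show ?case by auto
qed

lemma is_walk_map:
  assumes "is_walk V E p"
    and "\<And>x. x \<in> V \<Longrightarrow> f x \<in> V'"
    and "\<And>x y. x \<in> V \<Longrightarrow> y \<in> V \<Longrightarrow> E x y \<Longrightarrow> E' (f x) (f y)"
  shows "is_walk V' E' (map f p)"
  using assms(1)
proof (induction p rule: induct_list012)
  case 1 then show ?case by simp
next
  case (2 x) then show ?case using assms(2) by simp
next
  case (3 x y r)
  then have "y \<in> V" by (simp add: is_walk_def)
  with 3 show ?case using assms(2,3) by simp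
qed

lemma walk_betw_map:
  assumes "walk_betw V E x p y"
    and "\<And>x. x \<in> V \<Longrightarrow> f x \<in> V'"
    and "\<And>x y. x \<in> V \<Longrightarrow> y \<in> V \<Longrightarrow> E x y \<Longrightarrow> E' (f x) (f y)"
  shows "walk_betw V' E' (f x) (map f p) (f y)"
  using assms is_walk_map[of V E p f V' E']
  by (auto simp: walk_betw_def is_walk_def hd_map last_map)

lemma walk_betw_append:
  assumes "walk_betw V E x p y" "walk_betw V E y q z"
  shows "walk_betw V E x (p @ tl q) z"
  using assms is_walk_append[of V E p q]
  by (cases q) (auto simp: walk_betw_def is_walk_def)

lemma walk_length_ge_gdist:
  assumes "walk_betw V E x p y"
  shows "Suc (gdist V E x y) \<le> length p"
proof -
  have "length p = Suc (length p - 1)"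
    using assms by (simp add: walk_betw_def is_walk_def)
  moreover have "gdist V E x y \<le> length p - 1"
    unfolding gdist_def by (rule Least_le) (use assms calculation in metis)
  ultimately show ?thesis by linarith
qed

lemma shortest_path_exists:
  assumes "walk_betw V E x p y"
  shows "\<exists>q. shortest_path V E x q y"
proof -
  have "\<exists>q. walk_betw V E x q y \<and> length q = Suc (length p - 1)"
    using assms by (auto simp: walk_betw_def is_walk_def)
  then have "\<exists>q. walk_betw V E x q y \<and> length q = Suc (gdist V E x y)"
    unfolding gdist_def by (rule LeastI)
  then show ?thesis unfolding shortest_path_def .
qed

lemma internal_map: "internal (map f p) = f ` internal p"
  by (simp add: internal_def map_tl[symmetric] map_butlast[symmetric])

lemma internal_subset_set: "internal p \<subseteq> set p"
  unfolding internal_def by (cases p) (auto dest: in_set_butlastD)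

lemma total_mv_set_empty:
  assumes "connected_graph V E"
  shows "total_mv_set V E {}"
  using assms shortest_path_exists
  by (fastforce simp: total_mv_set_def visible_def connected_graph_def)

lemma card_le_mu_t:
  assumes "simple_graph V E" "total_mv_set V E X"
  shows "card X \<le> mu_t V E"
proof -
  have "card ` {X. total_mv_set V E X} \<subseteq> {..card V}"
    using assms(1) by (auto simp: total_mv_set_def simple_graph_def intro: card_mono)
  then show ?thesis
    unfolding mu_t_def using assms(2) by (intro Max_ge) (auto intro: finite_subset)
qed

lemma mu_t_attained:
  assumes "connected_graph V E"
  obtains X where "total_mv_set V E X" "card X = mu_t V E"
proof -
  have "card ` {X. total_mv_set V E X} \<subseteq> {..card V}"
    using assms by (auto simp: total_mv_set_def connected_graph_def simple_graph_def intro: card_mono)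
  moreover have "card ` {X. total_mv_set V E X} \<noteq> {}"
    using total_mv_set_empty[OF assms] by blast
  ultimately have "mu_t V E \<in> card ` {X. total_mv_set V E X}"
    unfolding mu_t_def by (intro Max_in) (auto intro: finite_subset)
  then show ?thesis using that by auto
qed

lemma unique_common_neighbour_notin_total_mv_set:
  assumes X: "total_mv_set V E X"
    and uvw: "u \<in> V" "v \<in> V" "w \<in> V" "u \<noteq> w" "\<not> E u w" "E u v" "E v w"
    and unique: "\<And>z. E u z \<Longrightarrow> E z w \<Longrightarrow> z = v"
  shows "v \<notin> X"
proof
  assume "v \<in> X"
  obtain p where p: "shortest_path V E u p w" and "internal p \<inter> X = {}"
    using X uvw unfolding total_mv_set_def visible_def by blast
  then have v: "v \<notin> internal p"
    using \<open>v \<in> X\<close> by blast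
  have "walk_betw V E u [u, v, w] w"
    using uvw by (simp add: walk_betw_def)
  then have "length p \<le> 3"
    using p walk_length_ge_gdist by (fastforce simp: shortest_path_def)
  moreover have pw: "walk_betw V E u p w"
    using p by (simp add: shortest_path_def)
  ultimately obtain z where "p = [u, z, w]"
    using uvw(4,5)
    by (auto simp: walk_betw_def is_walk_def numeral_3_eq_3 le_Suc_eq length_Suc_conv)
  then show False
    using pw v unique by (auto simp: walk_betw_def internal_def)
qed

lemma Pset_unique_common_neighbour:
  assumes G: "simple_graph V E" and v: "v \<in> Pset V E"
  obtains u w where "u \<in> V" "w \<in> V" "u \<noteq> w" "\<not> E u w" "E u v" "E v w"
    "\<And>z. E u z \<Longrightarrow> E z w \<Longrightarrow> z = v"
proof -
  have sym: "\<And>x y. E x y \<Longrightarrow> E y x" and inV: "\<And>x y. E x y \<Longrightarrow> x \<in> V \<and> y \<in> V"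
    using G unfolding simple_graph_def by blast+
  obtain u w where uw: "u \<in> V" "w \<in> V" "u \<noteq> w"
    and N: "closed_nbhd V E u \<inter> closed_nbhd V E w = {v}"
    using v unfolding Pset_def by blast
  have common: "z = v" if "z = u \<or> E u z" "z = w \<or> E w z" "z \<in> V" for z
    using N that by (auto simp: closed_nbhd_def)
  have "\<not> E u w"
    using common[of u] common[of w] uw sym by blast
  moreover have "v = u \<or> E u v" "v = w \<or> E w v"
    using N by (auto simp: closed_nbhd_def)
  then have "E u v" "E v w"
    using calculation uw sym by blast+
  moreover have "z = v" if "E u z" "E z w" for z
    using common[of z] that sym inV by blast
  ultimately show ?thesis
    using that uw by blast
qed

lemma simple_graph_cart:
  assumes "simple_graph VG EG" "simple_graph VH EH"
  shows "simple_graph (cart_V VG VH) (cart_E VG EG VH EH)"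
  using assms unfolding simple_graph_def cart_V_def cart_E_def by auto

lemma connected_graph_cart:
  assumes G: "connected_graph VG EG" and H: "connected_graph VH EH"
  shows "connected_graph (cart_V VG VH) (cart_E VG EG VH EH)"
proof -
  have "\<exists>p. walk_betw (VG \<times> VH) (cart_E VG EG VH EH) (g, h) p (g', h')"
    if gh: "g \<in> VG" "h \<in> VH" "g' \<in> VG" "h' \<in> VH" for g h g' h'
  proof -
    obtain p where "walk_betw VG EG g p g'"
      using G gh unfolding connected_graph_def by blast
    then have "walk_betw (VG \<times> VH) (cart_E VG EG VH EH) (g, h) (map (\<lambda>a. (a, h)) p) (g', h)"
      by (rule walk_betw_map) (use gh in \<open>auto simp: cart_E_def\<close>)
    moreover obtain q where "walk_betw VH EH h q h'"
      using H gh unfolding connected_graph_def by blast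
    then have "walk_betw (VG \<times> VH) (cart_E VG EG VH EH) (g', h) (map (Pair g') q) (g', h')"
      by (rule walk_betw_map) (use gh in \<open>auto simp: cart_E_def\<close>)
    ultimately show ?thesis
      by (blast intro: walk_betw_append)
  qed
  then show ?thesis
    using G H simple_graph_cart by (fastforce simp: connected_graph_def cart_V_def)
qed

lemma cart_walk_projection:
  assumes "is_walk (VG \<times> VH) (cart_E VG EG VH EH) p"
  shows "(\<exists>q. walk_betw VH EH (snd (hd p)) q (snd (last p)) \<and> length q < length p) \<or>
    (is_walk VH EH (map snd p) \<and> (\<forall>x\<in>set p. fst x = fst (hd p)))"
  using assms
proof (induction p rule: induct_list012)
  case 1 then show ?case by simp
next
  case (2 x) then show ?case by auto
next
  case (3 x y r)
  then have x: "snd x \<in> VH" and IH: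
    "(\<exists>q. walk_betw VH EH (snd y) q (snd (last (y # r))) \<and> length q < length (y # r)) \<or>
     (is_walk VH EH (map snd (y # r)) \<and> (\<forall>z\<in>set (y # r). fst z = fst y))"
    by auto
  from 3 have "(fst x = fst y \<and> EH (snd x) (snd y)) \<or> (EG (fst x) (fst y) \<and> snd x = snd y)"
    by (simp add: cart_E_def)
  then show ?case
  proof (elim disjE conjE)
    assume H_step: "fst x = fst y" "EH (snd x) (snd y)"
    show ?case
      using IH
    proof (elim disjE exE conjE)
      fix q assume "walk_betw VH EH (snd y) q (snd (last (y # r)))" "length q < length (y # r)"
      then show ?case
        using x H_step by (intro disjI1 exI[of _ "snd x # q"])
          (cases q, auto simp: walk_betw_def)
    qed (use x H_step in auto)
  next
    assume G_step: "EG (fst x) (fst y)" "snd x = snd y"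
    show ?case
      using IH
    proof (elim disjE conjE)
      assume "is_walk VH EH (map snd (y # r))"
      then show ?case
        using G_step by (intro disjI1 exI[of _ "map snd (y # r)"])
          (simp add: walk_betw_def last_map)
    qed (use G_step in force)
  qed
qed

lemma cart_shortest_path_in_layer:
  assumes p: "shortest_path (VG \<times> VH) (cart_E VG EG VH EH) (g, h) p (g, h')"
  shows "(\<forall>x\<in>set p. fst x = g) \<and> shortest_path VH EH h (map snd p) h'"
proof -
  have pw: "is_walk (VG \<times> VH) (cart_E VG EG VH EH) p" "hd p = (g, h)" "last p = (g, h')"
    using p by (auto simp: shortest_path_def walk_betw_def)
  then have "g \<in> VG"
    using hd_in_set[of p] by (auto simp: is_walk_def)
  have lift: "length p \<le> length q" if q: "walk_betw VH EH h q h'" for q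
  proof -
    have "walk_betw (VG \<times> VH) (cart_E VG EG VH EH) (g, h) (map (Pair g) q) (g, h')"
      by (rule walk_betw_map[OF q]) (use \<open>g \<in> VG\<close> in \<open>auto simp: cart_E_def\<close>)
    then show ?thesis
      using p walk_length_ge_gdist by (fastforce simp: shortest_path_def)
  qed
  have layer: "is_walk VH EH (map snd p) \<and> (\<forall>x\<in>set p. fst x = g)"
    using cart_walk_projection[OF pw(1)] lift pw(2,3) by fastforce
  moreover have "p \<noteq> []"
    using pw(1) by (cases p) auto
  ultimately have q: "walk_betw VH EH h (map snd p) h'"
    using pw by (simp add: walk_betw_def hd_map last_map)
  obtain q0 where "shortest_path VH EH h q0 h'"
    using shortest_path_exists[OF q] by blast
  then have "length p \<le> Suc (gdist VH EH h h')"
    using lift by (force simp: shortest_path_def)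
  with q walk_length_ge_gdist[OF q] show ?thesis
    using layer by (simp add: shortest_path_def)
qed

lemma total_mv_set_layer:
  assumes X: "total_mv_set (VG \<times> VH) (cart_E VG EG VH EH) X" and g: "g \<in> VG"
  shows "total_mv_set VH EH {h. (g, h) \<in> X}"
  unfolding total_mv_set_def
proof (intro conjI ballI)
  show "{h. (g, h) \<in> X} \<subseteq> VH"
    using X by (auto simp: total_mv_set_def)
  fix h h' assume "h \<in> VH" "h' \<in> VH"
  then obtain p where p: "shortest_path (VG \<times> VH) (cart_E VG EG VH EH) (g, h) p (g, h')"
    and disj: "internal p \<inter> X = {}"
    using X g unfolding total_mv_set_def visible_def by blast
  note layer = cart_shortest_path_in_layer[OF p]
  have "internal (map snd p) \<inter> {h. (g, h) \<in> X} = {}"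
  proof -
    have "(g, snd z) = z" if "z \<in> internal p" for z
      using layer internal_subset_set that by (metis prod.collapse subsetD)
    then show ?thesis
      using disj by (auto simp: internal_map)
  qed
  with layer show "visible VH EH {h. (g, h) \<in> X} h h'"
    unfolding visible_def by blast
qed

lemma Pset_layer_notin_total_mv_set:
  assumes G: "simple_graph VG EG" and H: "simple_graph VH EH"
    and X: "total_mv_set (VG \<times> VH) (cart_E VG EG VH EH) X"
    and g: "g \<in> Pset VG EG" and h: "h \<in> VH"
  shows "(g, h) \<notin> X"
proof -
  obtain u w where uw: "u \<in> VG" "w \<in> VG" "u \<noteq> w" "\<not> EG u w" "EG u g" "EG g w"
    and unique: "\<And>z. EG u z \<Longrightarrow> EG z w \<Longrightarrow> z = g"
    using Pset_unique_common_neighbour[OF G g] by blast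
  have "g \<in> VG"
    using g by (simp add: Pset_def)
  have "\<not> EH h h"
    using H by (simp add: simple_graph_def)
  show ?thesis
  proof (rule unique_common_neighbour_notin_total_mv_set[OF X, of "(u, h)" _ "(w, h)"])
    fix z assume "cart_E VG EG VH EH (u, h) z" "cart_E VG EG VH EH z (w, h)"
    then show "z = (g, h)"
      using uw(3) unique \<open>\<not> EH h h\<close> by (cases z) (auto simp: cart_E_def)
  qed (use uw h \<open>g \<in> VG\<close> in \<open>auto simp: cart_E_def\<close>)
qed

lemma mu_t_cart_le:
  assumes G: "connected_graph VG EG" and H: "connected_graph VH EH"
  shows "mu_t (cart_V VG VH) (cart_E VG EG VH EH) \<le> (card VG - card (Pset VG EG)) * mu_t VH EH"
proof -
  have sG: "simple_graph VG EG" and sH: "simple_graph VH EH"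
    using G H by (simp_all add: connected_graph_def)
  have fin: "finite VG" "finite VH"
    using sG sH by (simp_all add: simple_graph_def)
  obtain X where X: "total_mv_set (VG \<times> VH) (cart_E VG EG VH EH) X"
    and card_X: "card X = mu_t (cart_V VG VH) (cart_E VG EG VH EH)"
    using mu_t_attained[OF connected_graph_cart[OF G H]] by (auto simp: cart_V_def)
  define Y where "Y g = {h. (g, h) \<in> X}" for g
  have "X \<subseteq> Sigma (VG - Pset VG EG) Y"
    using X Pset_layer_notin_total_mv_set[OF sG sH X] by (auto simp: Y_def total_mv_set_def)
  moreover have fin_Y: "finite (Y g)" for g
    using X fin by (auto simp: Y_def total_mv_set_def intro: finite_subset)
  ultimately have "card X \<le> card (Sigma (VG - Pset VG EG) Y)"
    using fin by (intro card_mono) auto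
  also have "\<dots> = (\<Sum>g\<in>VG - Pset VG EG. card (Y g))"
    using fin fin_Y by simp
  also have "\<dots> \<le> card (VG - Pset VG EG) * mu_t VH EH"
    using sum_bounded_above[of "VG - Pset VG EG" "\<lambda>g. card (Y g)" "mu_t VH EH"]
      card_le_mu_t[OF sH total_mv_set_layer[OF X]] by (simp add: Y_def)
  also have "card (VG - Pset VG EG) = card VG - card (Pset VG EG)"
    using fin by (intro card_Diff_subset) (auto simp: Pset_def intro: finite_subset)
  finally show ?thesis
    using card_X by simp
qed

locale graph_iso =
  fixes \<phi> :: "'b \<Rightarrow> 'a" and V :: "'a set" and E :: "'a \<Rightarrow> 'a \<Rightarrow> bool"
    and V' :: "'b set" and E' :: "'b \<Rightarrow> 'b \<Rightarrow> bool"
  assumes bij: "bij \<phi>"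
    and vertices: "V' = \<phi> -` V"
    and edges: "\<And>x y. E' x y \<longleftrightarrow> E (\<phi> x) (\<phi> y)"
begin

lemma map_map_inv: "map \<phi> (map (inv \<phi>) p) = p"
  by (induction p) (simp_all add: bij_is_surj[OF bij] surj_f_inv_f)

lemma image_vertices: "\<phi> ` V' = V"
  using bij by (simp add: vertices bij_is_surj surj_image_vimage_eq)

lemma walk_betw_iff: "walk_betw V' E' x p y \<longleftrightarrow> walk_betw V E (\<phi> x) (map \<phi> p) (\<phi> y)"
  using bij_is_inj[OF bij]
  by (auto simp: walk_betw_def is_walk_def vertices edges hd_map last_map inj_eq)

lemma gdist_eq: "gdist V' E' x y = gdist V E (\<phi> x) (\<phi> y)"
proof -
  have "(\<exists>p. walk_betw V' E' x p y \<and> length p = Suc n) \<longleftrightarrow>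
        (\<exists>q. walk_betw V E (\<phi> x) q (\<phi> y) \<and> length q = Suc n)" for n
    unfolding walk_betw_iff by (metis length_map map_map_inv)
  then show ?thesis
    unfolding gdist_def by simp
qed

lemma shortest_path_iff:
  "shortest_path V' E' x p y \<longleftrightarrow> shortest_path V E (\<phi> x) (map \<phi> p) (\<phi> y)"
  by (simp add: shortest_path_def walk_betw_iff gdist_eq)

lemma visible_iff: "visible V' E' X x y \<longleftrightarrow> visible V E (\<phi> ` X) (\<phi> x) (\<phi> y)"
proof -
  have internal_image: "internal (map \<phi> p) \<inter> \<phi> ` X = \<phi> ` (internal p \<inter> X)" for p
    using bij_is_inj[OF bij] by (simp add: internal_map image_Int)
  show ?thesis
  proof
    assume "visible V' E' X x y"
    then obtain p where "shortest_path V' E' x p y" "internal p \<inter> X = {}"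
      unfolding visible_def by blast
    then show "visible V E (\<phi> ` X) (\<phi> x) (\<phi> y)"
      unfolding visible_def shortest_path_iff
      by (intro exI[of _ "map \<phi> p"]) (simp add: internal_image)
  next
    assume "visible V E (\<phi> ` X) (\<phi> x) (\<phi> y)"
    then obtain q where "shortest_path V E (\<phi> x) q (\<phi> y)" "internal q \<inter> \<phi> ` X = {}"
      unfolding visible_def by blast
    then show "visible V' E' X x y"
      unfolding visible_def shortest_path_iff
      using internal_image[of "map (inv \<phi>) q"] by (metis image_is_empty map_map_inv)
  qed
qed

lemma total_mv_set_iff: "total_mv_set V' E' X \<longleftrightarrow> total_mv_set V E (\<phi> ` X)"
  unfolding total_mv_set_def visible_iff image_vertices[symmetric]
  by (simp add: inj_image_subset_iff bij_is_inj[OF bij])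

lemma mu_t_eq: "mu_t V' E' = mu_t V E"
proof -
  have "{Y. total_mv_set V E Y} = image \<phi> ` {X. total_mv_set V' E' X}"
  proof (intro equalityI subsetI)
    fix Y assume "Y \<in> {Y. total_mv_set V E Y}"
    moreover have "Y = \<phi> ` (\<phi> -` Y)"
      using bij by (simp add: bij_is_surj surj_image_vimage_eq)
    ultimately show "Y \<in> image \<phi> ` {X. total_mv_set V' E' X}"
      using total_mv_set_iff[of "\<phi> -` Y"] by (intro image_eqI) auto
  qed (auto simp: total_mv_set_iff)
  moreover have "card (\<phi> ` X) = card X" for X
    by (rule card_image[OF inj_on_subset[OF bij_is_inj[OF bij] subset_UNIV]])
  ultimately show ?thesis
    unfolding mu_t_def by (simp add: image_image)
qed

end

lemma mu_t_cart_swap: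
  "mu_t (cart_V VH VG) (cart_E VH EH VG EG) = mu_t (cart_V VG VH) (cart_E VG EG VH EH)"
proof -
  interpret graph_iso prod.swap "cart_V VG VH" "cart_E VG EG VH EH"
    "cart_V VH VG" "cart_E VH EH VG EG"
    by unfold_locales (auto simp: cart_V_def cart_E_def)
  show ?thesis
    by (rule mu_t_eq)
qed

theorem theorem5p3:
  fixes VG :: "'a set" and EG :: "'a \<Rightarrow> 'a \<Rightarrow> bool"
    and VH :: "'b set" and EH :: "'b \<Rightarrow> 'b \<Rightarrow> bool"
  assumes "connected_graph VG EG" and "connected_graph VH EH"
  shows "mu_t (cart_V VG VH) (cart_E VG EG VH EH)
           \<le> min ((card VG - card (Pset VG EG)) * mu_t VH EH)
                  ((card VH - card (Pset VH EH)) * mu_t VG EG)"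
  using mu_t_cart_le[OF assms] mu_t_cart_le[OF assms(2,1)]
    mu_t_cart_swap[where VG = VH and EG = EH and VH = VG and EH = EG]
  by simp

end
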